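(* Let $M=\{(x,y,z)\in\mathbb{C}^3: x^2+y^2+z^2=3xyz\}$ and let $\varphi^z_t$ denote the flow (defined for all $t\in\mathbb{C}$) of the vector field $V^z=(2y-3xz)\partial_x-(2x-3yz)\partial_y$ on $M$. Let $(x,y,z)\in M$ with $z\neq0$ and $4-9z^2\neq0$. Then the map \[ \mathbb{C}\ni t\mapsto\varphi^z_t(x,y,z)\in\{(u,v,z): u^2+v^2+z^2=3uvz\} \] is surjective.
   Context: The flow $\varphi^z_t$ preserves the $z$-coordinate, so its image lies in the indicated curve. *)

theory Defs
  imports "HOL-Analysis.Analysis"
begin

definition markov_M :: "(complex \<times> complex \<times> complex) set" where
  "markov_M = {(x,y,z). x^2 + y^2 + z^2 = 3*x*y*z}"

definition Vz :: "complex \<times> complex \<times> complex \<Rightarrow> complex \<times> complex \<times> complex" where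
  "Vz p = (case p of (x,y,z) \<Rightarrow> (2*y - 3*x*z, -(2*x - 3*y*z), 0))"

text \<open>gamma is an integral curve (complex time, defined on all of C) of Vz starting at p,
  i.e. t \<mapsto> gamma t is the flow line t \<mapsto> phi^z_t(p).\<close>
definition is_flow_line_Vz ::
  "(complex \<Rightarrow> complex \<times> complex \<times> complex) \<Rightarrow> complex \<times> complex \<times> complex \<Rightarrow> bool" where
  "is_flow_line_Vz \<gamma> p \<longleftrightarrow> \<gamma> 0 = p \<and>
     (\<forall>t. ((\<lambda>s. fst (\<gamma> s)) has_field_derivative fst (Vz (\<gamma> t))) (at t) \<and>
          ((\<lambda>s. fst (snd (\<gamma> s))) has_field_derivative fst (snd (Vz (\<gamma> t)))) (at t) \<and>
          ((\<lambda>s. snd (snd (\<gamma> s))) has_field_derivative snd (snd (Vz (\<gamma> t)))) (at t))"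

end

theory Submission
  imports Defs
begin

text \<open>The flow keeps z fixed and acts on (x, y) by the linear system
  (x, y)' = (2y - 3zx, 3zy - 2x), whose eigenvalues are \<open>\<plusminus>m\<close> with \<open>m\<^sup>2 = 9z\<^sup>2 - 4 \<noteq> 0\<close>.
  In the eigencoordinates \<open>a = (m - 3z)x + 2y\<close>, \<open>b = (-m - 3z)x + 2y\<close> the flow is
  \<open>(a, b) \<mapsto> (e\<^sup>m\<^sup>t a, e\<^sup>-\<^sup>m\<^sup>t b)\<close>, and the curve \<open>x\<^sup>2 + y\<^sup>2 + z\<^sup>2 = 3xyz\<close> becomes the
  hyperbola \<open>ab = -4z\<^sup>2\<close>, which is nondegenerate as \<open>z \<noteq> 0\<close>. Since \<open>exp\<close> maps \<open>\<complex>\<close> onto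
  \<open>\<complex> - {0}\<close>, the flow is transitive on this hyperbola.\<close>

lemma has_field_derivative_zero_imp_constant:
  fixes f :: "'a :: real_normed_field \<Rightarrow> 'a"
  assumes "\<And>t. (f has_field_derivative 0) (at t)"
  shows "f t = f 0"
proof -
  obtain c where "\<forall>s\<in>UNIV. f s = c"
    using has_field_derivative_zero_constant[of UNIV f] assms by auto
  then show ?thesis by simp
qed

lemma has_field_derivative_linear_imp_exp:
  fixes f :: "complex \<Rightarrow> complex"
  assumes "\<And>t. (f has_field_derivative (m * f t)) (at t)"
  shows "f t = f 0 * exp (m * t)"
proof -
  have "((\<lambda>s. f s * exp (- (m * s))) has_field_derivative 0) (at s)" for s
  proof -
    have "((\<lambda>s. f s * exp (- (m * s))) has_field_derivative
            m * f s * exp (- (m * s)) + exp (- (m * s)) * (- m) * f s) (at s)"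
      by (rule DERIV_mult[OF assms]) (auto intro!: derivative_eq_intros)
    then show ?thesis by (simp add: algebra_simps)
  qed
  then have "f t * exp (- (m * t)) = f 0"
    using has_field_derivative_zero_imp_constant by fastforce
  then show ?thesis by (simp add: exp_minus field_simps)
qed

lemma exp_orbit_hyperbola:
  fixes a b a0 b0 m :: complex
  assumes "a * b = a0 * b0" and "a * b \<noteq> 0" and "m \<noteq> 0"
  obtains t where "a = a0 * exp (m * t)" and "b = b0 * exp (- m * t)"
proof
  define t where "t = Ln (a / a0) / m"
  have nonzero: "a \<noteq> 0" "a0 \<noteq> 0"
    using assms(1,2) by auto
  then have exp_mt: "exp (m * t) = a / a0"
    unfolding t_def using assms(3) by simp
  then show "a = a0 * exp (m * t)"
    using assms by simp
  show "b = b0 * exp (- m * t)"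
    using assms(1) nonzero by (simp add: exp_minus exp_mt field_simps)
qed

definition eigencoord :: "complex \<Rightarrow> complex \<Rightarrow> complex \<Rightarrow> complex \<Rightarrow> complex" where
  "eigencoord m z u v = (m - 3 * z) * u + 2 * v"

lemma eigencoord_product:
  assumes "m\<^sup>2 = 9 * z\<^sup>2 - 4"
  shows "eigencoord m z u v * eigencoord (- m) z u v = 4 * (u\<^sup>2 + v\<^sup>2 - 3 * u * v * z)"
  unfolding eigencoord_def using assms by algebra

lemma markov_curve_iff_eigencoord_product:
  assumes "m\<^sup>2 = 9 * z\<^sup>2 - 4"
  shows "u\<^sup>2 + v\<^sup>2 + z\<^sup>2 = 3 * u * v * z \<longleftrightarrow>
         eigencoord m z u v * eigencoord (- m) z u v = - 4 * z\<^sup>2"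
  unfolding eigencoord_product[OF assms] by algebra

lemma eigencoord_inject:
  assumes "m \<noteq> 0"
    and "eigencoord m z u v = eigencoord m z u' v'"
    and "eigencoord (- m) z u v = eigencoord (- m) z u' v'"
  shows "u = u'" and "v = v'"
proof -
  have "2 * m * u = 2 * m * u'"
    using assms(2,3) unfolding eigencoord_def by algebra
  then show "u = u'"
    using assms(1) by simp
  then show "v = v'"
    using assms(2) unfolding eigencoord_def by simp
qed

lemma eigencoord_along_solution:
  fixes U V :: "complex \<Rightarrow> complex"
  assumes "m\<^sup>2 = 9 * z\<^sup>2 - 4"
    and "\<And>t. (U has_field_derivative 2 * V t - 3 * z * U t) (at t)"
    and "\<And>t. (V has_field_derivative 3 * z * V t - 2 * U t) (at t)"
  shows "eigencoord m z (U t) (V t) = eigencoord m z (U 0) (V 0) * exp (m * t)"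
proof -
  have "((\<lambda>s. eigencoord m z (U s) (V s)) has_field_derivative
          m * eigencoord m z (U t) (V t)) (at t)" for t
  proof -
    have "((\<lambda>s. eigencoord m z (U s) (V s)) has_field_derivative
            (m - 3 * z) * (2 * V t - 3 * z * U t) + 2 * (3 * z * V t - 2 * U t)) (at t)"
      unfolding eigencoord_def using assms(2,3) by (auto intro!: derivative_eq_intros)
    moreover have "(m - 3 * z) * (2 * V t - 3 * z * U t) + 2 * (3 * z * V t - 2 * U t)
          = m * eigencoord m z (U t) (V t)"
      unfolding eigencoord_def using assms(1) by algebra
    ultimately show ?thesis
      by simp
  qed
  then show ?thesis
    by (rule has_field_derivative_linear_imp_exp)
qed

lemma is_flow_line_VzD:
  assumes "is_flow_line_Vz \<gamma> (x, y, z)"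
  shows "\<gamma> 0 = (x, y, z)"
    and "snd (snd (\<gamma> t)) = z"
    and "((\<lambda>s. fst (\<gamma> s)) has_field_derivative
           2 * fst (snd (\<gamma> t)) - 3 * z * fst (\<gamma> t)) (at t)"
    and "((\<lambda>s. fst (snd (\<gamma> s))) has_field_derivative
           3 * z * fst (snd (\<gamma> t)) - 2 * fst (\<gamma> t)) (at t)"
proof -
  have Vz_at: "Vz (\<gamma> t) = (2 * fst (snd (\<gamma> t)) - 3 * fst (\<gamma> t) * snd (snd (\<gamma> t)),
                  - (2 * fst (\<gamma> t) - 3 * fst (snd (\<gamma> t)) * snd (snd (\<gamma> t))), 0)" for t
    by (cases "\<gamma> t") (simp add: Vz_def)
  note flow = assms[unfolded is_flow_line_Vz_def]
  show "\<gamma> 0 = (x, y, z)"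
    using flow by simp
  have "snd (snd (\<gamma> t)) = snd (snd (\<gamma> 0))" for t
    by (rule has_field_derivative_zero_imp_constant) (use flow Vz_at in simp)
  then show z_const: "snd (snd (\<gamma> t)) = z" for t
    using flow by simp
  show "((\<lambda>s. fst (\<gamma> s)) has_field_derivative
          2 * fst (snd (\<gamma> t)) - 3 * z * fst (\<gamma> t)) (at t)"
    using flow Vz_at z_const by (simp add: mult.commute mult.left_commute)
  show "((\<lambda>s. fst (snd (\<gamma> s))) has_field_derivative
          3 * z * fst (snd (\<gamma> t)) - 2 * fst (\<gamma> t)) (at t)"
    using flow Vz_at z_const by (simp add: mult.commute mult.left_commute)
qed

lemma is_flow_line_Vz_eigencoord:
  assumes "is_flow_line_Vz \<gamma> (x, y, z)" and "m\<^sup>2 = 9 * z\<^sup>2 - 4"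
  shows "eigencoord m z (fst (\<gamma> t)) (fst (snd (\<gamma> t))) = eigencoord m z x y * exp (m * t)"
  using eigencoord_along_solution[OF assms(2) is_flow_line_VzD(3,4)[OF assms(1)]]
    is_flow_line_VzD(1)[OF assms(1)] by simp

theorem lemma6p5:
  fixes x y z :: complex and \<gamma> :: "complex \<Rightarrow> complex \<times> complex \<times> complex"
  assumes "(x, y, z) \<in> markov_M" and "z \<noteq> 0" and "4 - 9 * z^2 \<noteq> 0"
    and "is_flow_line_Vz \<gamma> (x, y, z)"
  shows "range \<gamma> = {p. snd (snd p) = z \<and> (fst p)^2 + (fst (snd p))^2 + z^2 = 3 * fst p * fst (snd p) * z}"
proof -
  define m where "m = csqrt (9 * z\<^sup>2 - 4)"
  have m_sq: "m\<^sup>2 = 9 * z\<^sup>2 - 4" "(- m)\<^sup>2 = 9 * z\<^sup>2 - 4" and "m \<noteq> 0"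
    using assms(3) by (auto simp: m_def)
  note curve_iff = markov_curve_iff_eigencoord_product[OF m_sq(1)]
  define a0 b0 where "a0 = eigencoord m z x y" and "b0 = eigencoord (- m) z x y"
  have a0_b0: "a0 * b0 = - 4 * z\<^sup>2"
    using assms(1) curve_iff by (simp add: a0_def b0_def markov_M_def)
  have \<gamma>_eigencoords: "eigencoord m z (fst (\<gamma> t)) (fst (snd (\<gamma> t))) = a0 * exp (m * t)"
    "eigencoord (- m) z (fst (\<gamma> t)) (fst (snd (\<gamma> t))) = b0 * exp (- m * t)" for t
    using is_flow_line_Vz_eigencoord[OF assms(4) m_sq(1)] is_flow_line_Vz_eigencoord[OF assms(4) m_sq(2)]
    by (simp_all add: a0_def b0_def)
  have z_const: "snd (snd (\<gamma> t)) = z" for t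
    using is_flow_line_VzD(2)[OF assms(4)] .
  show ?thesis
  proof (intro equalityI subsetI)
    fix p assume "p \<in> range \<gamma>"
    then obtain t where p: "p = \<gamma> t" by blast
    have "eigencoord m z (fst p) (fst (snd p)) * eigencoord (- m) z (fst p) (fst (snd p)) = a0 * b0"
      unfolding p \<gamma>_eigencoords
      by (simp add: mult_ac flip: exp_add)
    then show "p \<in> {p. snd (snd p) = z \<and> (fst p)^2 + (fst (snd p))^2 + z^2 = 3 * fst p * fst (snd p) * z}"
      using a0_b0 curve_iff z_const p by auto
  next
    fix p assume "p \<in> {p. snd (snd p) = z \<and> (fst p)^2 + (fst (snd p))^2 + z^2 = 3 * fst p * fst (snd p) * z}"
    then obtain u v where p: "p = (u, v, z)" and "u\<^sup>2 + v\<^sup>2 + z\<^sup>2 = 3 * u * v * z"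
      by (cases p) auto
    then have on_hyperbola: "eigencoord m z u v * eigencoord (- m) z u v = a0 * b0"
      using a0_b0 curve_iff by simp
    moreover have "eigencoord m z u v * eigencoord (- m) z u v \<noteq> 0"
      using on_hyperbola a0_b0 \<open>z \<noteq> 0\<close> by simp
    ultimately obtain t where
      "eigencoord m z u v = a0 * exp (m * t)" "eigencoord (- m) z u v = b0 * exp (- m * t)"
      using \<open>m \<noteq> 0\<close> by (rule exp_orbit_hyperbola)
    then have "\<gamma> t = p"
      using eigencoord_inject[OF \<open>m \<noteq> 0\<close>] z_const unfolding p \<gamma>_eigencoords[symmetric]
      by (metis prod.collapse)
    then show "p \<in> range \<gamma>" by blast
  qed
qed

end
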